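(* Let $n,m\ge1$, $\lambda,\delta>0$, $\mathbf P_\gamma\in\mathbb R^{n\times n}$ and $\boldsymbol\Sigma\in\mathbb R^{m\times m}$ symmetric positive definite, $\mathbf m\in\mathbb R^n$, $\mathbf y\in\mathbb R^m$, and $\mathbf F:\mathbb R^n\to\mathbb R^m$ continuously differentiable with Jacobian $\mathbf J(\mathbf u)=\nabla\mathbf F(\mathbf u)$. Fix $\mathbf u_\ast\in\mathbb R^n$, let $r={\rm rank}\,\mathbf J(\mathbf u_\ast)$, and let $\tfrac{\lambda}{\delta}\boldsymbol\Sigma^{-1}\mathbf J(\mathbf u_\ast)\mathbf P_\gamma^{-1}=\mathbf Y\mathbf S\mathbf X^\top$ be a compact generalized SVD with $\mathbf S\in\mathbb R^{r\times r}$ diagonal, $\mathbf Y^\top(\lambda^{-1}\boldsymbol\Sigma)\mathbf Y=\mathbf I_r$, $\mathbf X^\top(\delta\mathbf P_\gamma)\mathbf X=\mathbf I_r$; let $\boldsymbol\Pi=\mathbf X\mathbf X^\top(\delta\mathbf P_\gamma)$ and let $V$ denote the range of $\mathbf I-\boldsymbol\Pi$. For $\mathbf u_r\in\mathbb R^r$, $\mathbf u_\perp\in V$ define $$\Theta_{\rm L}(\mathbf u_r;\mathbf u_\perp)=\mathbf u_r+\mathbf S\mathbf Y^\top\big(\mathbf F(\mathbf u_\ast)+\mathbf J(\mathbf u_\ast)(\mathbf X\mathbf u_r+\mathbf u_\perp+\mathbf m-\mathbf u_\ast)-\mathbf y\big),$$ $$\Theta_{\rm R}(\mathbf u_r;\mathbf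 u_\perp)=\mathbf S\mathbf Y^\top\big(\mathbf F(\mathbf X\mathbf u_r+\mathbf u_\perp+\mathbf m)-\mathbf J(\mathbf u_\ast)(\mathbf X\mathbf u_r+\mathbf u_\perp+\mathbf m-\mathbf u_\ast)-\mathbf F(\mathbf u_\ast)\big).$$ Let $\mathbf m_r=\mathbf X^\top(\delta\mathbf P_\gamma)(\mathbf u_\ast-\mathbf m)$ and assume there is $\varepsilon>0$ such that, with $\mathbb S(\varepsilon)=\{\mathbf u_r\in\mathbb R^r:\|\mathbf u_r-\mathbf m_r\|<\varepsilon\}$, $$\sup_{\mathbf u_r\in\mathbb S(\varepsilon),\,\mathbf u_\perp\in V}\sigma_{\max}\Big((\mathbf I_r+\mathbf S^2)^{-1}\nabla_{\mathbf u_r}\Theta_{\rm R}(\mathbf u_r;\mathbf u_\perp)\Big)<1.$$ For $\tilde\varepsilon>0$ and $\tau\in(0,1)$ define $\psi:\mathbb R_{\ge0}\to\mathbb R$ by $\psi(s)=s$ if $s<\tilde\varepsilon(1-\tau)$; $\psi(s)=\tilde\varepsilon-\frac{\tau\tilde\varepsilon}{4}+\frac{s-\tilde\varepsilon}{2}-\frac{(s-\tilde\varepsilon)^2}{4\tau\tilde\varepsilon}$ if $s\in[\tilde\varepsilon(1-\tau),\tilde\varepsilon(1+\tau))$; $\psi(s)=\tilde\varepsilon$ if $s\ge\tilde\varepsilon(1+\tau)$; and define $\boldsymbol\Psi(\mathbf u_r)=\mathbf m_r+\frac{\psi(\|\mathbf u_r-\mathbf m_r\|)}{\|\mathbf u_r-\mathbf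 m_r\|}(\mathbf u_r-\mathbf m_r)$. Given $\tilde\varepsilon\le\varepsilon$ and $0<\tau\ll1$ (in particular $\tau\in(0,1)$), define $$\widetilde\Theta(\mathbf u_r;\mathbf u_\perp)=\Theta_{\rm L}(\mathbf u_r;\mathbf u_\perp)+\Theta_{\rm R}(\boldsymbol\Psi(\mathbf u_r);\mathbf u_\perp).$$ Then for every $\mathbf u_\perp\in V$ the map $\mathbf u_r\mapsto\widetilde\Theta(\mathbf u_r;\mathbf u_\perp)$ is a diffeomorphism of $\mathbb R^r$.
   Context: $\sigma_{\max}$ denotes the largest singular value. Bold $\mathbf m\in\mathbb R^n$ is a fixed (prior mean) vector. $\boldsymbol\Psi(\mathbf m_r)$ is interpreted as $\mathbf m_r$. *)

theory Defs
  imports "HOL-Analysis.Analysis"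
begin

definition sym_pos_def :: "real^'n^'n \<Rightarrow> bool" where
  "sym_pos_def A \<longleftrightarrow> transpose A = A \<and> (\<forall>x. x \<noteq> 0 \<longrightarrow> x \<bullet> (A *v x) > 0)"

definition diagonal_mat :: "real^'n^'n \<Rightarrow> bool" where
  "diagonal_mat A \<longleftrightarrow> (\<forall>i j. i \<noteq> j \<longrightarrow> A $ i $ j = 0)"

definition sigma_max :: "real^'n^'m \<Rightarrow> real" where
  "sigma_max A = sqrt (Max {\<mu>. \<exists>x. x \<noteq> 0 \<and> (transpose A ** A) *v x = \<mu> *\<^sub>R x})"

definition C1_map :: "(real^'n \<Rightarrow> real^'m) \<Rightarrow> bool" where
  "C1_map f \<longleftrightarrow> (\<forall>x. f differentiable (at x)) \<and> continuous_on UNIV (\<lambda>x. jacobian f (at x))"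

definition C1_diffeomorphism :: "(real^'n \<Rightarrow> real^'n) \<Rightarrow> bool" where
  "C1_diffeomorphism f \<longleftrightarrow> bij f \<and> C1_map f \<and> C1_map (inv f)"

definition psi_cut :: "real \<Rightarrow> real \<Rightarrow> real \<Rightarrow> real" where
  "psi_cut et \<tau> s =
     (if s < et * (1 - \<tau>) then s
      else if s < et * (1 + \<tau>) then
        et - \<tau> * et / 4 + (s - et) / 2 - (s - et)^2 / (4 * \<tau> * et)
      else et)"

definition Psi_map :: "real \<Rightarrow> real \<Rightarrow> real^'r \<Rightarrow> real^'r \<Rightarrow> real^'r" where
  "Psi_map et \<tau> mr ur =
     (if ur = mr then mr
      else mr + (psi_cut et \<tau> (norm (ur - mr)) / norm (ur - mr)) *\<^sub>R (ur - mr))"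

end

(*
  The GSVD gives S Y^T J(u_s) X = S^2, so Theta_L(u_r) = (I + S^2) u_r + b for a constant b and the
  map is u_r |-> M u_r + b + Theta_R(Psi(u_r)) with M = I + S^2. The cutoff Psi is C^1, 1-Lipschitz
  and takes values in the closed ball of radius et <= epsilon around m_r, on which the sigma_max
  hypothesis makes M^-1 Theta_R a contraction. Hence the map is M (id + h) with h = M^-1 (b + Theta_R o Psi)
  a C^1 contraction, and id + h is a C^1 diffeomorphism: it is bijective by Banach's fixed point
  theorem, its inverse is Lipschitz, and the derivative (I + Dh)^-1 of the inverse is uniformly
  bounded, hence depends continuously on the point.
*)
theory Submission
  imports Defs
begin

section \<open>The cutoff profile\<close>

lemma DERIV_if_less:
  fixes g h :: "real \<Rightarrow> real"
  assumes g: "\<And>x. (g has_real_derivative g' x) (at x)"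
    and h: "\<And>x. (h has_real_derivative h' x) (at x)"
    and same_value: "g c = h c" and same_deriv: "g' c = h' c"
  shows "((\<lambda>x. if x < c then g x else h x) has_real_derivative (if x < c then g' x else h' x)) (at x)"
proof -
  let ?f = "\<lambda>x. if x < c then g x else h x"
  consider "x < c" | "c < x" | "x = c" by linarith
  then show ?thesis
  proof cases
    case 1
    have "\<forall>\<^sub>F y in nhds x. ?f y = g y"
      using eventually_nhds_in_open[of "{..<c}" x] 1 by (auto elim: eventually_mono)
    then show ?thesis using 1 g DERIV_cong_ev by fastforce
  next
    case 2
    have "\<forall>\<^sub>F y in nhds x. ?f y = h y"
      using eventually_nhds_in_open[of "{c<..}" x] 2 by (auto elim: eventually_mono)
    then show ?thesis using 2 h DERIV_cong_ev by fastforce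
  next
    case 3
    have "((\<lambda>y. (g y - g c) / (y - c)) \<longlongrightarrow> h' c) (at_left c)"
      using g[of c] same_deriv by (simp add: has_field_derivative_iff filterlim_at_split)
    then have left: "((\<lambda>y. (?f y - ?f c) / (y - c)) \<longlongrightarrow> h' c) (at_left c)"
      by (rule Lim_transform_eventually)
         (use same_value in \<open>auto intro: eventually_mono[OF eventually_at_left_real[of "c - 1" c]]\<close>)
    have "((\<lambda>y. (h y - h c) / (y - c)) \<longlongrightarrow> h' c) (at_right c)"
      using h[of c] by (simp add: has_field_derivative_iff filterlim_at_split)
    then have right: "((\<lambda>y. (?f y - ?f c) / (y - c)) \<longlongrightarrow> h' c) (at_right c)"
      by (rule Lim_transform_eventually)
         (auto intro: eventually_mono[OF eventually_at_right_real[of c "c + 1"]])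
    from left right show ?thesis
      using 3 by (simp add: has_field_derivative_iff filterlim_at_split)
  qed
qed

definition dpsi_cut :: "real \<Rightarrow> real \<Rightarrow> real \<Rightarrow> real" where
  "dpsi_cut et \<tau> s = max 0 (min 1 (1/2 - (s - et) / (2 * \<tau> * et)))"

lemma psi_cut_has_real_derivative:
  assumes "0 < et" "0 < \<tau>" "\<tau> < 1"
  shows "(psi_cut et \<tau> has_real_derivative dpsi_cut et \<tau> s) (at s)"
proof -
  define q where "q s = et - \<tau> * et / 4 + (s - et) / 2 - (s - et)^2 / (4 * \<tau> * et)" for s
  define dq where "dq s = 1/2 - (s - et) / (2 * \<tau> * et)" for s
  have q: "(q has_real_derivative dq s) (at s)" for s
    unfolding q_def dq_def using assms
    by (auto intro!: derivative_eq_intros simp: field_simps power2_eq_square)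
  have upper: "((\<lambda>s. if s < et * (1 + \<tau>) then q s else et) has_real_derivative
      (if s < et * (1 + \<tau>) then dq s else 0)) (at s)" for s
    by (rule DERIV_if_less[OF q DERIV_const])
       (use assms in \<open>auto simp: q_def dq_def field_simps power2_eq_square\<close>)
  have "((\<lambda>s. if s < et * (1 - \<tau>) then s else if s < et * (1 + \<tau>) then q s else et)
      has_real_derivative (if s < et * (1 - \<tau>) then 1 else if s < et * (1 + \<tau>) then dq s else 0)) (at s)"
    by (rule DERIV_if_less[OF DERIV_ident upper])
       (use assms in \<open>auto simp: q_def dq_def field_simps power2_eq_square\<close>)
  moreover have "psi_cut et \<tau> = (\<lambda>s. if s < et * (1 - \<tau>) then s else if s < et * (1 + \<tau>) then q s else et)"
    by (auto simp: psi_cut_def q_def fun_eq_iff)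
  moreover have "(if s < et * (1 - \<tau>) then 1 else if s < et * (1 + \<tau>) then dq s else 0) = dpsi_cut et \<tau> s"
    using assms by (auto simp: dpsi_cut_def dq_def field_simps)
  ultimately show ?thesis by simp
qed

section \<open>Radial maps\<close>

definition radial_map :: "(real \<Rightarrow> real) \<Rightarrow> 'a::real_normed_vector \<Rightarrow> 'a" where
  "radial_map g v = (g (norm v) / norm v) *\<^sub>R v"

(* The branch v = 0 is right because radial_profile asks g to be the identity near 0. *)
definition radial_deriv ::
    "(real \<Rightarrow> real) \<Rightarrow> (real \<Rightarrow> real) \<Rightarrow> 'a::real_inner \<Rightarrow> 'a \<Rightarrow> 'a" where
  "radial_deriv g g' v h =
     (if v = 0 then h
      else (g (norm v) / norm v) *\<^sub>R h + ((g' (norm v) - g (norm v) / norm v) * (h \<bullet> sgn v)) *\<^sub>R sgn v)"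

locale radial_profile =
  fixes g g' :: "real \<Rightarrow> real" and a :: real
  assumes has_deriv: "\<And>s. (g has_real_derivative g' s) (at s)"
    and deriv_continuous: "continuous_on UNIV g'"
    and deriv_nonneg: "\<And>s. 0 \<le> g' s"
    and deriv_le_1: "\<And>s. g' s \<le> 1"
    and a_pos: "0 < a"
    and identity_near_0: "\<And>s. s < a \<Longrightarrow> g s = s"
begin

lemma deriv_near_0: "s < a \<Longrightarrow> g' s = 1"
proof -
  assume "s < a"
  then have "\<forall>\<^sub>F t in nhds s. g t = t"
    using eventually_nhds_in_open[of "{..<a}" s] by (auto elim: eventually_mono simp: identity_near_0)
  then have "(g has_real_derivative 1) (at s)"
    using DERIV_ident DERIV_cong_ev by fastforce
  then show ?thesis using has_deriv DERIV_unique by blast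
qed

lemma profile_mono:
  assumes "s \<le> t" shows "g s \<le> g t"
  by (rule DERIV_nonneg_imp_nondecreasing[OF assms]) (use has_deriv deriv_nonneg in blast)

lemma profile_nonneg: "0 \<le> s \<Longrightarrow> 0 \<le> g s"
  using profile_mono[of 0 s] identity_near_0[OF a_pos] by simp

lemma profile_le: "0 \<le> s \<Longrightarrow> g s \<le> s"
proof -
  assume "0 \<le> s"
  have "0 - g 0 \<le> s - g s"
  proof (rule DERIV_nonneg_imp_nondecreasing[OF \<open>0 \<le> s\<close>])
    show "\<exists>y. ((\<lambda>t. t - g t) has_real_derivative y) (at x) \<and> 0 \<le> y" for x
      using DERIV_diff[OF DERIV_ident has_deriv[of x]] deriv_le_1[of x] by auto
  qed
  then show ?thesis using identity_near_0[OF a_pos] by simp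
qed

lemma norm_radial_map: "norm (radial_map g v) = g (norm v)"
  using profile_nonneg[of "norm v"] identity_near_0[OF a_pos]
  by (cases "v = 0") (auto simp: radial_map_def)

lemma radial_map_near_0: "norm v < a \<Longrightarrow> radial_map g v = v"
  by (cases "v = 0") (auto simp: radial_map_def identity_near_0)

lemma radial_map_has_derivative: "(radial_map g has_derivative radial_deriv g g' v) (at v)"
proof (cases "v = 0")
  case True
  have "(radial_map g has_derivative (\<lambda>h. h)) (at v)"
    by (rule has_derivative_transform_within_open[OF has_derivative_ident, where s="ball 0 a"])
       (use True a_pos in \<open>auto simp: radial_map_near_0\<close>)
  then show ?thesis using True by (simp add: radial_deriv_def[abs_def])
next
  case False
  have "(radial_map g has_derivative (\<lambda>h. (g (norm v) / norm v) *\<^sub>R h +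
      ((h \<bullet> sgn v * g' (norm v) * norm v - g (norm v) * (h \<bullet> sgn v)) / (norm v * norm v)) *\<^sub>R v)) (at v)"
    unfolding radial_map_def[abs_def] using False
    by (intro has_derivative_scaleR has_derivative_divide' DERIV_compose_FDERIV[OF has_deriv]
        has_derivative_norm has_derivative_ident) auto
  then show ?thesis
    by (rule has_derivative_eq_rhs)
       (use False in \<open>auto simp: fun_eq_iff radial_deriv_def sgn_div_norm field_simps scaleR_scaleR\<close>)
qed

lemma isCont_radial_deriv: "isCont (\<lambda>v. radial_deriv g g' v h) v"
proof (cases "v = 0")
  case True
  have "\<forall>\<^sub>F w in nhds v. radial_deriv g g' w h = h"
    using eventually_nhds_in_open[of "ball 0 a" v] True a_pos
    by (auto elim!: eventually_mono simp: radial_deriv_def deriv_near_0 identity_near_0)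
  then show ?thesis by (simp add: isCont_cong)
next
  case False
  have "\<forall>\<^sub>F w in nhds v. radial_deriv g g' w h =
      (g (norm w) / norm w) *\<^sub>R h + ((g' (norm w) - g (norm w) / norm w) * (h \<bullet> sgn w)) *\<^sub>R sgn w"
    by (rule eventually_mono[OF t1_space_nhds[OF False]]) (simp add: radial_deriv_def)
  moreover have "isCont g s" "isCont g' s" for s
    using DERIV_isCont[OF has_deriv] deriv_continuous by (auto simp: continuous_on_eq_continuous_at)
  then have "isCont (\<lambda>w. g (norm w)) v" "isCont (\<lambda>w. g' (norm w)) v"
    by (auto intro: isCont_o2[OF continuous_norm[OF continuous_ident]])
  ultimately show ?thesis using False
    by (subst isCont_cong) (auto intro!: continuous_intros)
qed

(* Along v the derivative scales by g', orthogonally to v by g |v| / |v|; both factors lie in [0, 1]. *)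
lemma norm_radial_deriv_le: "norm (radial_deriv g g' v h) \<le> norm h"
proof (cases "v = 0")
  case False
  define u where "u = sgn v"
  define r where "r = g (norm v) / norm v"
  define d where "d = g' (norm v)"
  define k where "k = h \<bullet> u"
  have u: "u \<bullet> u = 1" using False by (simp add: u_def dot_square_norm norm_sgn)
  have r: "0 \<le> r" "r \<le> 1"
    using False profile_nonneg[of "norm v"] profile_le[of "norm v"] by (auto simp: r_def field_simps)
  have d: "0 \<le> d" "d \<le> 1" using deriv_nonneg deriv_le_1 by (auto simp: d_def)
  have k: "k\<^sup>2 \<le> h \<bullet> h"
    using Cauchy_Schwarz_ineq[of h u] u by (simp add: k_def power2_eq_square)
  have "(norm (radial_deriv g g' v h))\<^sup>2
      = (r *\<^sub>R h + ((d - r) * k) *\<^sub>R u) \<bullet> (r *\<^sub>R h + ((d - r) * k) *\<^sub>R u)"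
    using False by (simp add: radial_deriv_def power2_norm_eq_inner u_def r_def d_def k_def)
  also have "\<dots> = r\<^sup>2 * (h \<bullet> h - k\<^sup>2) + d\<^sup>2 * k\<^sup>2"
    by (simp add: inner_add_left inner_add_right inner_commute[of u h] k_def[symmetric] u
        power2_eq_square algebra_simps)
  also have "\<dots> \<le> 1 * (h \<bullet> h - k\<^sup>2) + 1 * k\<^sup>2"
    using r d k by (intro add_mono mult_right_mono) (auto simp: power_le_one)
  also have "\<dots> = (norm h)\<^sup>2" by (simp add: power2_norm_eq_inner)
  finally show ?thesis by (simp add: power2_le_iff_abs_le)
qed (simp add: radial_deriv_def)

lemma lipschitz_radial_map: "1-lipschitz_on UNIV (radial_map g :: 'a::euclidean_space \<Rightarrow> 'a)"
  by (rule bounded_derivative_imp_lipschitz[where f'="radial_deriv g g'"])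
     (auto intro: has_derivative_at_withinI radial_map_has_derivative onorm_le
        simp: norm_radial_deriv_le)

end

section \<open>Largest singular value\<close>

lemma finite_eigenvalues_self_adjoint:
  fixes B :: "real^'n^'n"
  assumes self_adjoint: "\<And>y z. (B *v y) \<bullet> z = y \<bullet> (B *v z)"
  shows "finite {\<mu>. \<exists>x. x \<noteq> 0 \<and> B *v x = \<mu> *\<^sub>R x}"
proof -
  define E where "E = {\<mu>. \<exists>x. x \<noteq> 0 \<and> B *v x = \<mu> *\<^sub>R x}"
  define e where "e \<mu> = (SOME x. x \<noteq> 0 \<and> B *v x = \<mu> *\<^sub>R x)" for \<mu>
  have e: "e \<mu> \<noteq> 0" "B *v e \<mu> = \<mu> *\<^sub>R e \<mu>" if "\<mu> \<in> E" for \<mu>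
    using someI_ex[of "\<lambda>x. x \<noteq> 0 \<and> B *v x = \<mu> *\<^sub>R x"] that by (auto simp: E_def e_def)
  have orth: "e \<mu> \<bullet> e \<nu> = 0" if "\<mu> \<in> E" "\<nu> \<in> E" "\<mu> \<noteq> \<nu>" for \<mu> \<nu>
  proof -
    have "\<mu> * (e \<mu> \<bullet> e \<nu>) = (B *v e \<mu>) \<bullet> e \<nu>" using e(2)[OF that(1)] by simp
    also have "\<dots> = e \<mu> \<bullet> (B *v e \<nu>)" by (rule self_adjoint)
    also have "\<dots> = \<nu> * (e \<mu> \<bullet> e \<nu>)" using e(2)[OF that(2)] by simp
    finally show ?thesis using that(3) by simp
  qed
  have "inj_on e E"
  proof (rule inj_onI)
    fix \<mu> \<nu> assume "\<mu> \<in> E" "\<nu> \<in> E" "e \<mu> = e \<nu>"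
    then show "\<mu> = \<nu>" using e(1)[of \<mu>] orth[of \<mu> \<nu>] by auto
  qed
  moreover have "finite (e ` E)"
  proof (rule finiteI_independent, rule pairwise_orthogonal_independent)
    show "pairwise orthogonal (e ` E)"
      unfolding pairwise_def orthogonal_def by (metis imageE orth)
    show "0 \<notin> e ` E" using e(1) by (metis imageE)
  qed
  ultimately show ?thesis unfolding E_def[symmetric] by (rule finite_imageD[rotated])
qed

lemma psd_form_zero_imp_kernel:
  fixes C :: "real^'n^'n"
  assumes self_adjoint: "\<And>y z. (C *v y) \<bullet> z = y \<bullet> (C *v z)"
    and psd: "\<And>y. 0 \<le> y \<bullet> (C *v y)" and zero: "x \<bullet> (C *v x) = 0"
  shows "C *v x = 0"
proof -
  define w where "w = C *v x"
  define a where "a = w \<bullet> w"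
  define b where "b = w \<bullet> (C *v w)"
  have "(x - s *\<^sub>R w) \<bullet> (C *v (x - s *\<^sub>R w)) = s\<^sup>2 * b - 2 * s * a" for s
    using zero self_adjoint[of w x]
    by (simp add: w_def a_def b_def matrix_vector_mult_diff_distrib inner_diff_left inner_diff_right
        inner_commute[of x] power2_eq_square algebra_simps)
  then have along_line: "0 \<le> s\<^sup>2 * b - 2 * s * a" for s by (metis psd)
  have "a = 0"
  proof (rule ccontr)
    assume "a \<noteq> 0"
    then have "a > 0" by (simp add: a_def)
    define s where "s = a / (b + 1)"
    have "b \<ge> 0" by (simp add: b_def psd)
    then have "s > 0" "s * b < 2 * a"
      using \<open>a > 0\<close> by (simp_all add: s_def mult_imp_div_pos_less)
    then have "s * (s * b - 2 * a) < 0" by (simp add: mult_pos_neg)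
    moreover have "0 \<le> s * (s * b - 2 * a)"
      using along_line[of s] by (simp add: power2_eq_square algebra_simps)
    ultimately show False by simp
  qed
  then show ?thesis by (simp add: a_def w_def)
qed

(* A maximiser x0 of |A x| on the unit sphere is an eigenvector of A^T A, since the form
   |A x0|^2 |y|^2 - |A y|^2 is positive semidefinite and vanishes at x0. *)
lemma norm_matrix_vector_le_sigma_max:
  fixes A :: "real^'n^'m"
  shows "norm (A *v x) \<le> sigma_max A * norm x"
proof -
  define B where "B = transpose A ** A"
  have B_inner: "(B *v y) \<bullet> z = (A *v y) \<bullet> (A *v z)" for y z
    by (simp add: B_def dot_lmul_matrix flip: matrix_vector_mul_assoc)
  have "sphere (0::real^'n) 1 \<noteq> {}" by simp
  moreover have "continuous_on (sphere 0 1) (\<lambda>y. norm (A *v y))"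
    by (intro continuous_intros linear_continuous_on matrix_vector_mul_bounded_linear)
  ultimately obtain x0 where x0: "norm x0 = 1"
    and max: "\<And>y. norm y = 1 \<Longrightarrow> norm (A *v y) \<le> norm (A *v x0)"
    using continuous_attains_sup[OF compact_sphere] by (metis mem_sphere_0)
  define \<mu>0 where "\<mu>0 = (norm (A *v x0))\<^sup>2"
  have bound: "norm (A *v y) \<le> norm (A *v x0) * norm y" for y
  proof (cases "y = 0")
    case False
    have "norm (A *v (y /\<^sub>R norm y)) \<le> norm (A *v x0)" using False by (intro max) simp
    then show ?thesis using False by (simp add: matrix_vector_mult_scaleR field_simps)
  qed simp
  have "(\<mu>0 *\<^sub>R mat 1 - B) *v x0 = 0"
  proof (rule psd_form_zero_imp_kernel)
    show "((\<mu>0 *\<^sub>R mat 1 - B) *v y) \<bullet> z = y \<bullet> ((\<mu>0 *\<^sub>R mat 1 - B) *v z)" for y z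
      using B_inner[of y z] B_inner[of z y]
      by (simp add: matrix_vector_mult_diff_rdistrib inner_diff_left inner_diff_right inner_commute
          flip: scaleR_matrix_vector_assoc)
    show "0 \<le> y \<bullet> ((\<mu>0 *\<^sub>R mat 1 - B) *v y)" for y
      using power_mono[OF bound[of y] norm_ge_zero, of 2] B_inner[of y y]
      by (simp add: matrix_vector_mult_diff_rdistrib inner_diff_right inner_commute \<mu>0_def
          power2_norm_eq_inner[symmetric] power_mult_distrib flip: scaleR_matrix_vector_assoc)
    show "x0 \<bullet> ((\<mu>0 *\<^sub>R mat 1 - B) *v x0) = 0"
      using x0 B_inner[of x0 x0]
      by (simp add: matrix_vector_mult_diff_rdistrib inner_diff_right inner_commute \<mu>0_def
          power2_norm_eq_inner[symmetric] flip: scaleR_matrix_vector_assoc)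
  qed
  then have "B *v x0 = \<mu>0 *\<^sub>R x0"
    by (simp add: matrix_vector_mult_diff_rdistrib flip: scaleR_matrix_vector_assoc)
  then have "\<mu>0 \<in> {\<mu>. \<exists>x. x \<noteq> 0 \<and> B *v x = \<mu> *\<^sub>R x}"
    using x0 by (intro CollectI exI[of _ x0]) auto
  moreover have "finite {\<mu>. \<exists>x. x \<noteq> 0 \<and> B *v x = \<mu> *\<^sub>R x}"
    using B_inner by (intro finite_eigenvalues_self_adjoint) (simp add: inner_commute)
  ultimately have "\<mu>0 \<le> Max {\<mu>. \<exists>x. x \<noteq> 0 \<and> B *v x = \<mu> *\<^sub>R x}"
    by (rule Max_ge[rotated])
  then have "sqrt \<mu>0 \<le> sigma_max A"
    unfolding sigma_max_def B_def[symmetric] by (rule real_sqrt_le_mono)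
  then have "norm (A *v x0) \<le> sigma_max A" by (simp add: \<mu>0_def)
  then have "norm (A *v x0) * norm x \<le> sigma_max A * norm x" by (rule mult_right_mono) simp
  with bound[of x] show ?thesis by linarith
qed

lemma continuous_on_matrix_vector_mult [continuous_intros]:
  fixes A :: "'a::topological_space \<Rightarrow> real^'n^'m"
  assumes "continuous_on S A" "continuous_on S v"
  shows "continuous_on S (\<lambda>x. A x *v v x)"
  unfolding matrix_vector_mult_def by (intro continuous_intros assms)

lemma has_derivative_matrix_vector_mult [derivative_intros]:
  fixes A :: "real^'n^'m"
  shows "(f has_derivative f') F \<Longrightarrow> ((\<lambda>x. A *v f x) has_derivative (\<lambda>h. A *v f' h)) F"
  by (rule bounded_linear.has_derivative[OF matrix_vector_mul_bounded_linear])

lemma matrix_inv_right: "invertible A \<Longrightarrow> A ** matrix_inv A = mat 1"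
  and matrix_inv_left: "invertible A \<Longrightarrow> matrix_inv A ** A = mat 1"
  unfolding invertible_def matrix_inv_def by (metis (mono_tags, lifting) someI_ex)+

lemma invertible_sym_pos_def: "sym_pos_def A \<Longrightarrow> invertible A"
  unfolding sym_pos_def_def invertible_left_inverse matrix_left_invertible_ker
  by (metis inner_zero_right less_irrefl)

lemma transpose_diagonal_mat: "diagonal_mat S \<Longrightarrow> transpose S = S"
  by (auto simp: diagonal_mat_def transpose_def vec_eq_iff) metis

lemma invertible_mat_1_add_square:
  fixes S :: "real^'n^'n"
  assumes "transpose S = S"
  shows "invertible (mat 1 + S ** S)"
  unfolding invertible_left_inverse matrix_left_invertible_ker
proof (intro allI impI)
  fix k assume "(mat 1 + S ** S) *v k = 0"
  then have "k \<bullet> k + k \<bullet> (S *v (S *v k)) = 0"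
    by (simp add: matrix_vector_mult_add_rdistrib flip: inner_add_right matrix_vector_mul_assoc)
  moreover have "k \<bullet> (S *v (S *v k)) = (S *v k) \<bullet> (S *v k)"
    using dot_lmul_matrix[of k S "S *v k"] assms by (metis transpose_matrix_vector)
  ultimately have "k \<bullet> k + (S *v k) \<bullet> (S *v k) = 0" by simp
  then show "k = 0" by (metis add_nonneg_eq_0_iff inner_eq_zero_iff inner_ge_zero)
qed

lemma compact_gsvd_core:
  fixes Jm :: "real^'n^'m" and Y :: "real^'r^'m" and S :: "real^'r^'r" and X :: "real^'r^'n"
  assumes lam: "lam > 0" and \<delta>: "\<delta> > 0" and "invertible P" "invertible Sig"
    and gsvd: "(lam / \<delta>) *\<^sub>R (matrix_inv Sig ** Jm ** matrix_inv P) = Y ** S ** transpose X"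
    and Y_orth: "transpose Y ** ((1 / lam) *\<^sub>R Sig) ** Y = mat 1"
    and X_orth: "transpose X ** (\<delta> *\<^sub>R P) ** X = mat 1"
  shows "transpose Y ** Jm ** X = S"
proof -
  have "Sig ** (matrix_inv Sig ** Jm ** matrix_inv P) ** P = (Sig ** matrix_inv Sig) ** Jm ** (matrix_inv P ** P)"
    by (simp add: matrix_mul_assoc)
  then have "(lam / \<delta>) *\<^sub>R Jm = Sig ** ((lam / \<delta>) *\<^sub>R (matrix_inv Sig ** Jm ** matrix_inv P)) ** P"
    by (simp add: matrix_scalar_ac matrix_inv_left[OF \<open>invertible P\<close>]
        matrix_inv_right[OF \<open>invertible Sig\<close>] flip: scalar_matrix_assoc)
  also have "\<dots> = Sig ** Y ** S ** transpose X ** P" by (simp add: gsvd matrix_mul_assoc)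
  finally have "(\<delta> / lam) *\<^sub>R ((lam / \<delta>) *\<^sub>R Jm)
      = (\<delta> / lam) *\<^sub>R (Sig ** Y ** S ** transpose X ** P)"
    by simp
  then have J: "Jm = (\<delta> / lam) *\<^sub>R (Sig ** Y ** S ** transpose X ** P)"
    using lam \<delta> by simp
  have "transpose Y ** Jm ** X = (\<delta> / lam) *\<^sub>R ((transpose Y ** Sig ** Y) ** S ** (transpose X ** P ** X))"
    by (simp add: J matrix_scalar_ac scalar_matrix_assoc matrix_mul_assoc)
  also have "transpose Y ** Sig ** Y = lam *\<^sub>R mat 1"
    using arg_cong[OF Y_orth, of "\<lambda>A. lam *\<^sub>R A"] lam
    by (simp add: matrix_scalar_ac scalar_matrix_assoc)
  also have "transpose X ** P ** X = (1 / \<delta>) *\<^sub>R mat 1"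
    using arg_cong[OF X_orth, of "\<lambda>A. (1 / \<delta>) *\<^sub>R A"] \<delta>
    by (simp add: matrix_scalar_ac scalar_matrix_assoc)
  finally show ?thesis
    using lam \<delta> by (simp add: matrix_scalar_ac scalar_matrix_assoc)
qed

lemma projected_linearization_affine:
  fixes Jm :: "real^'n^'m" and Y :: "real^'r^'m" and S :: "real^'r^'r" and X :: "real^'r^'n"
  assumes "transpose Y ** Jm ** X = S"
  shows "(S ** transpose Y) *v (a + Jm *v (X *v u + d) - z)
    = (S ** S) *v u + (S ** transpose Y) *v (a + Jm *v d - z)"
proof -
  have "(S ** transpose Y) *v (Jm *v (X *v u)) = (S ** (transpose Y ** Jm ** X)) *v u"
    by (simp add: matrix_vector_mul_assoc matrix_mul_assoc del: transpose_matrix_vector)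
  then have "(S ** transpose Y) *v (Jm *v (X *v u)) = (S ** S) *v u"
    using assms by simp
  moreover have "a + Jm *v (X *v u + d) - z = Jm *v (X *v u) + (a + Jm *v d - z)"
    by (simp add: matrix_vector_right_distrib)
  ultimately show ?thesis
    by (simp only: matrix_vector_right_distrib)
qed

lemma invertible_mat_1_add_contraction:
  fixes A :: "real^'n^'n"
  assumes A: "\<And>k. norm (A *v k) \<le> c * norm k" and "c < 1"
  shows "invertible (mat 1 + A)" and "norm (matrix_inv (mat 1 + A) *v z) \<le> norm z / (1 - c)"
proof -
  have lower: "(1 - c) * norm k \<le> norm ((mat 1 + A) *v k)" for k
    using norm_diff_ineq[of k "A *v k"] A[of k] by (simp add: matrix_vector_mult_add_rdistrib algebra_simps)
  show inv: "invertible (mat 1 + A)"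
    unfolding invertible_left_inverse matrix_left_invertible_ker
  proof (intro allI impI)
    fix k assume "(mat 1 + A) *v k = 0"
    then have "(1 - c) * norm k \<le> 0" using lower[of k] by simp
    then show "k = 0" using \<open>c < 1\<close> by (simp add: mult_le_0_iff)
  qed
  have "(mat 1 + A) *v (matrix_inv (mat 1 + A) *v z) = z"
    by (simp add: matrix_vector_mul_assoc matrix_inv_right[OF inv])
  then show "norm (matrix_inv (mat 1 + A) *v z) \<le> norm z / (1 - c)"
    using lower[of "matrix_inv (mat 1 + A) *v z"] \<open>c < 1\<close> by (simp add: field_simps)
qed

lemma continuous_on_matrix_inv_vector:
  fixes D :: "'a::metric_space \<Rightarrow> real^'n^'n"
  assumes cont: "continuous_on S D" and inv: "\<And>x. x \<in> S \<Longrightarrow> invertible (D x)"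
    and bound: "\<And>x z. x \<in> S \<Longrightarrow> norm (matrix_inv (D x) *v z) \<le> K * norm z"
  shows "continuous_on S (\<lambda>x. matrix_inv (D x) *v z)"
  unfolding continuous_on_def
proof
  fix x0 assume "x0 \<in> S"
  define w where "w = matrix_inv (D x0) *v z"
  have "((\<lambda>x. D x *v w) \<longlongrightarrow> D x0 *v w) (at x0 within S)"
    using cont \<open>x0 \<in> S\<close> continuous_on_matrix_vector_mult[OF cont continuous_on_const, of w]
    by (simp add: continuous_on_def)
  then have "((\<lambda>x. D x *v w - D x0 *v w) \<longlongrightarrow> 0) (at x0 within S)" by (rule LIM_zero)
  moreover have "\<forall>\<^sub>F x in at x0 within S. norm (matrix_inv (D x) *v z - w) \<le> norm (D x *v w - D x0 *v w) * K"
    unfolding eventually_at_filter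
  proof (rule always_eventually, intro allI impI)
    fix x assume "x \<noteq> x0" "x \<in> S"
    have "D x0 *v w = z" by (simp add: w_def matrix_vector_mul_assoc matrix_inv_right[OF inv[OF \<open>x0 \<in> S\<close>]])
    then have "matrix_inv (D x) *v z - w = matrix_inv (D x) *v (D x0 *v w - D x *v w)"
      by (simp add: matrix_vector_mult_diff_distrib matrix_vector_mul_assoc matrix_inv_left[OF inv[OF \<open>x \<in> S\<close>]])
    then show "norm (matrix_inv (D x) *v z - w) \<le> norm (D x *v w - D x0 *v w) * K"
      using bound[OF \<open>x \<in> S\<close>] by (simp add: norm_minus_commute mult.commute)
  qed
  ultimately have "((\<lambda>x. matrix_inv (D x) *v z - w) \<longlongrightarrow> 0) (at x0 within S)"
    by (rule tendsto_0_le)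
  then show "((\<lambda>x. matrix_inv (D x) *v z) \<longlongrightarrow> matrix_inv (D x0) *v z) (at x0 within S)"
    unfolding w_def by (rule LIM_zero_cancel)
qed

lemma C1_mapI:
  fixes f :: "real^'n \<Rightarrow> real^'m"
  assumes deriv: "\<And>x. (f has_derivative L x) (at x)"
    and cont: "\<And>h. continuous_on UNIV (\<lambda>x. L x h)"
  shows "C1_map f"
proof -
  have "jacobian f (at x) = matrix (L x)" for x
    unfolding jacobian_def using frechet_derivative_at[OF deriv] by simp
  moreover have "continuous_on UNIV (\<lambda>x. matrix (L x))"
    unfolding matrix_def by (intro continuous_on_vec_lambda continuous_on_component cont)
  ultimately show ?thesis
    using deriv unfolding C1_map_def differentiable_def by auto
qed

lemma C1_map_has_derivative:
  "C1_map f \<Longrightarrow> (f has_derivative (\<lambda>h. jacobian f (at x) *v h)) (at x)"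
  by (simp add: C1_map_def jacobian_works)

lemma C1_map_compose:
  fixes f :: "real^'n \<Rightarrow> real^'m" and g :: "real^'m \<Rightarrow> real^'k"
  assumes f: "C1_map f" and g: "C1_map g"
  shows "C1_map (\<lambda>x. g (f x))"
proof (rule C1_mapI)
  show "((\<lambda>x. g (f x)) has_derivative (\<lambda>h. jacobian g (at (f x)) *v (jacobian f (at x) *v h))) (at x)" for x
    using has_derivative_compose[OF C1_map_has_derivative[OF f] C1_map_has_derivative[OF g]] .
  have f_cont: "continuous_on UNIV f"
    using f unfolding C1_map_def
    by (intro continuous_at_imp_continuous_on ballI differentiable_imp_continuous_within) blast
  have Jf: "continuous_on UNIV (\<lambda>x. jacobian f (at x))" and Jg: "continuous_on UNIV (\<lambda>y. jacobian g (at y))"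
    using f g by (simp_all add: C1_map_def)
  show "continuous_on UNIV (\<lambda>x. jacobian g (at (f x)) *v (jacobian f (at x) *v h))" for h
    by (rule continuous_on_matrix_vector_mult[OF continuous_on_compose2[OF Jg f_cont subset_UNIV]
          continuous_on_matrix_vector_mult[OF Jf continuous_on_const]])
qed

lemma C1_map_affine: "C1_map (\<lambda>x. A *v x + b)"
  by (rule C1_mapI[where L="\<lambda>_ h. A *v h"]) (auto intro!: derivative_eq_intros simp: continuous_on_const)

lemma C1_map_linearization_remainder:
  fixes F :: "real^'n \<Rightarrow> real^'m" and J :: "real^'n \<Rightarrow> real^'n^'m" and X :: "real^'r^'n"
    and A :: "real^'m^'k"
  assumes F_deriv: "\<And>u. (F has_derivative (\<lambda>h. J u *v h)) (at u)" and J_cont: "continuous_on UNIV J"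
  shows "C1_map (\<lambda>w. A *v (F (X *v w + a) - J u0 *v (X *v w + a - u0) - F u0))"
proof (rule C1_mapI)
  fix w
  have "((\<lambda>w. X *v w + a) has_derivative (\<lambda>k. X *v k)) (at w)" by (auto intro!: derivative_eq_intros)
  from has_derivative_compose[OF this F_deriv]
  show "((\<lambda>w. A *v (F (X *v w + a) - J u0 *v (X *v w + a - u0) - F u0)) has_derivative
      (\<lambda>k. A *v (J (X *v w + a) *v (X *v k) - J u0 *v (X *v k)))) (at w)"
    by (auto intro!: derivative_eq_intros)
next
  fix k
  have "continuous_on UNIV (\<lambda>w. J (X *v w + a))"
    by (rule continuous_on_compose2[OF J_cont _ subset_UNIV]) (intro continuous_intros)
  then show "continuous_on UNIV (\<lambda>w. A *v (J (X *v w + a) *v (X *v k) - J u0 *v (X *v k)))"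
    by (intro continuous_intros)
qed

lemma radial_profile_psi_cut:
  assumes "0 < et" "0 < \<tau>" "\<tau> < 1"
  shows "radial_profile (psi_cut et \<tau>) (dpsi_cut et \<tau>) (et * (1 - \<tau>))"
proof
  show "(psi_cut et \<tau> has_real_derivative dpsi_cut et \<tau> s) (at s)" for s
    by (rule psi_cut_has_real_derivative[OF assms])
  show "continuous_on UNIV (dpsi_cut et \<tau>)"
    using assms unfolding dpsi_cut_def[abs_def] by (intro continuous_intros) auto
qed (use assms in \<open>auto simp: dpsi_cut_def psi_cut_def\<close>)

lemma Psi_map_eq_radial_map: "Psi_map et \<tau> m u = m + radial_map (psi_cut et \<tau>) (u - m)"
  by (simp add: Psi_map_def radial_map_def)

context
  fixes et \<tau> :: real
  assumes et: "0 < et" and \<tau>: "0 < \<tau>" "\<tau> < 1"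
begin

interpretation psi: radial_profile "psi_cut et \<tau>" "dpsi_cut et \<tau>" "et * (1 - \<tau>)"
  by (rule radial_profile_psi_cut[OF et \<tau>])

lemma psi_cut_le: "psi_cut et \<tau> s \<le> et"
proof -
  have "psi_cut et \<tau> s \<le> psi_cut et \<tau> (max s (et * (1 + \<tau>)))" by (rule psi.profile_mono) simp
  also have "\<dots> = et" using et \<tau> by (simp add: psi_cut_def)
  finally show ?thesis .
qed

lemma C1_map_Psi_map: "C1_map (Psi_map et \<tau> m)"
proof (rule C1_mapI)
  fix u
  have "((\<lambda>u. u - m) has_derivative (\<lambda>h. h)) (at u)" by (auto intro!: derivative_eq_intros)
  from has_derivative_add[OF has_derivative_const has_derivative_compose[OF this psi.radial_map_has_derivative]]
  show "(Psi_map et \<tau> m has_derivative radial_deriv (psi_cut et \<tau>) (dpsi_cut et \<tau>) (u - m)) (at u)"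
    unfolding Psi_map_eq_radial_map[abs_def] by simp
next
  show "continuous_on UNIV (\<lambda>u. radial_deriv (psi_cut et \<tau>) (dpsi_cut et \<tau>) (u - m) h)" for h
    by (intro continuous_at_imp_continuous_on ballI isCont_o2[OF _ psi.isCont_radial_deriv] continuous_intros)
qed

lemma lipschitz_Psi_map: "1-lipschitz_on UNIV (Psi_map et \<tau> m)"
  using lipschitz_onD[OF psi.lipschitz_radial_map, of "_ - m" "_ - m"]
  by (intro lipschitz_onI) (auto simp: Psi_map_eq_radial_map dist_norm)

lemma Psi_map_in_cball: "Psi_map et \<tau> m u \<in> cball m et"
  by (simp add: Psi_map_eq_radial_map dist_norm psi.norm_radial_map psi_cut_le)

end

section \<open>Lipschitz perturbations of the identity\<close>

lemma norm_derivative_le_lipschitz: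
  fixes f :: "'a::real_normed_vector \<Rightarrow> 'b::real_normed_vector"
  assumes deriv: "(f has_derivative f') (at x)" and lip: "C-lipschitz_on UNIV f"
  shows "norm (f' h) \<le> C * norm h"
proof (cases "h = 0")
  case True
  then show ?thesis using linear_0[OF has_derivative_linear[OF deriv]] by simp
next
  case False
  interpret f': bounded_linear f' using deriv by (rule has_derivative_bounded_linear)
  show ?thesis
  proof (rule field_le_epsilon)
    fix e :: real assume "e > 0"
    then obtain d where "d > 0"
      and d: "\<And>y. norm (y - x) < d \<Longrightarrow> norm (f y - f x - f' (y - x)) \<le> e / norm h * norm (y - x)"
      using deriv False unfolding has_derivative_at_alt by (meson divide_pos_pos zero_less_norm_iff)
    define t where "t = d / (2 * norm h)"
    have t: "t > 0" "norm (t *\<^sub>R h) < d" using \<open>d > 0\<close> False by (auto simp: t_def)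
    have "t * norm (f' h) = norm (f' (t *\<^sub>R h))" using t by (simp add: f'.scaleR)
    also have "\<dots> \<le> norm (f (x + t *\<^sub>R h) - f x) + norm (f (x + t *\<^sub>R h) - f x - f' (t *\<^sub>R h))"
      using norm_triangle_sub[of "f' (t *\<^sub>R h)" "f (x + t *\<^sub>R h) - f x"]
      by (simp add: norm_minus_commute)
    also have "\<dots> \<le> C * norm (t *\<^sub>R h) + e / norm h * norm (t *\<^sub>R h)"
      using lipschitz_on_normD[OF lip, of "x + t *\<^sub>R h" x] d[of "x + t *\<^sub>R h"] t by (intro add_mono) auto
    also have "\<dots> = t * (C * norm h + e)" using t False by (simp add: field_simps)
    finally show "norm (f' h) \<le> C * norm h + e" using t by simp
  qed
qed

(* The bound is only assumed on the open ball; continuity carries the estimate to the closed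
   ball, which the cutoff reaches when et = epsilon. *)
lemma lipschitz_on_cball_sigma_max_jacobian:
  fixes R :: "real^'n \<Rightarrow> real^'m" and A :: "real^'m^'k"
  assumes diff: "\<And>w. R differentiable (at w)" and "0 < \<epsilon>" "0 \<le> c"
    and bound: "\<And>w. w \<in> ball m \<epsilon> \<Longrightarrow> sigma_max (A ** jacobian R (at w)) \<le> c"
  shows "c-lipschitz_on (cball m \<epsilon>) (\<lambda>w. A *v R w)"
proof -
  have deriv: "((\<lambda>w. A *v R w) has_derivative (\<lambda>h. (A ** jacobian R (at w)) *v h)) (at w)" for w
    using has_derivative_matrix_vector_mult[OF diff[unfolded jacobian_works]]
    by (simp add: matrix_vector_mul_assoc)
  have "c-lipschitz_on (ball m \<epsilon>) (\<lambda>w. A *v R w)"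
  proof (rule bounded_derivative_imp_lipschitz)
    show "((\<lambda>w. A *v R w) has_derivative (\<lambda>h. (A ** jacobian R (at w)) *v h)) (at w within ball m \<epsilon>)" for w
      by (rule has_derivative_at_withinI[OF deriv])
    show "onorm (\<lambda>h. (A ** jacobian R (at w)) *v h) \<le> c" if "w \<in> ball m \<epsilon>" for w
    proof (rule onorm_le)
      fix h
      have "norm ((A ** jacobian R (at w)) *v h) \<le> sigma_max (A ** jacobian R (at w)) * norm h"
        by (rule norm_matrix_vector_le_sigma_max)
      also have "\<dots> \<le> c * norm h" using bound[OF that] by (rule mult_right_mono) simp
      finally show "norm ((A ** jacobian R (at w)) *v h) \<le> c * norm h" .
    qed
  qed (simp_all add: \<open>0 \<le> c\<close>)
  moreover have "continuous_on (closure (ball m \<epsilon>)) (\<lambda>w. A *v R w)"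
    by (intro continuous_at_imp_continuous_on ballI) (rule has_derivative_continuous[OF deriv])
  ultimately show ?thesis
    using lipschitz_on_closure closure_ball[OF \<open>0 < \<epsilon>\<close>] by metis
qed

lemma bij_add_contraction:
  fixes h :: "'a::banach \<Rightarrow> 'a"
  assumes lip: "c-lipschitz_on UNIV h" and "c < 1"
  shows "bij (\<lambda>x. x + h x)"
proof (rule bijI)
  show "inj (\<lambda>x. x + h x)"
  proof (rule injI)
    fix x y assume eq: "x + h x = y + h y"
    have "x - y = (x + h x) - (y + h y) - (h x - h y)" by (simp add: algebra_simps)
    then have "norm (x - y) = norm (h x - h y)" by (simp add: eq norm_minus_commute)
    then have "norm (x - y) \<le> c * norm (x - y)" using lipschitz_on_normD[OF lip, of x y] by simp
    then show "x = y" using \<open>c < 1\<close> by (simp add: mult_le_cancel_right1)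
  qed
  show "surj (\<lambda>x. x + h x)"
  proof (rule surjI)
    fix z
    have "\<exists>!u. z - h u = u"
      using lipschitz_on_nonneg[OF lip] \<open>c < 1\<close> lipschitz_onD[OF lip]
      by (intro banach_fix_type) (auto simp: dist_norm norm_minus_commute)
    then have "z - h (THE u. z - h u = u) = (THE u. z - h u = u)" by (rule theI')
    then show "(THE u. z - h u = u) + h (THE u. z - h u = u) = z" by (simp add: algebra_simps)
  qed
qed

lemma lipschitz_inv_add_contraction:
  fixes h :: "'a::banach \<Rightarrow> 'a"
  assumes lip: "c-lipschitz_on UNIV h" and "c < 1"
  shows "(1 / (1 - c))-lipschitz_on UNIV (inv (\<lambda>x. x + h x))"
proof (rule lipschitz_onI)
  let ?g = "inv (\<lambda>x. x + h x)"
  fix a b :: 'a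
  have g: "?g y + h (?g y) = y" for y
    using bij_add_contraction[OF assms] by (meson bij_inv_eq_iff)
  have "?g a - ?g b = (?g a + h (?g a)) - (?g b + h (?g b)) - (h (?g a) - h (?g b))"
    by (simp add: algebra_simps)
  then have "norm (?g a - ?g b) \<le> norm (a - b) + norm (h (?g a) - h (?g b))"
    unfolding g by (metis norm_triangle_ineq4)
  also have "\<dots> \<le> norm (a - b) + c * norm (?g a - ?g b)"
    using lipschitz_on_normD[OF lip] by simp
  finally show "dist (?g a) (?g b) \<le> 1 / (1 - c) * dist a b"
    using \<open>c < 1\<close> by (simp add: dist_norm field_simps)
qed (use \<open>c < 1\<close> in simp)

lemma C1_diffeomorphism_add_contraction:
  fixes h :: "real^'n \<Rightarrow> real^'n"
  assumes C1: "C1_map h" and lip: "c-lipschitz_on UNIV h" and "c < 1"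
  shows "C1_diffeomorphism (\<lambda>x. x + h x)"
proof -
  define g where "g = inv (\<lambda>x. x + h x)"
  define D where "D x = mat 1 + jacobian h (at x)" for x
  have bij: "bij (\<lambda>x. x + h x)" by (rule bij_add_contraction[OF lip \<open>c < 1\<close>])
  then have fg: "g y + h (g y) = y" for y unfolding g_def by (meson bij_inv_eq_iff)
  have deriv: "((\<lambda>x. x + h x) has_derivative (\<lambda>k. D x *v k)) (at x)" for x
    using has_derivative_add[OF has_derivative_ident C1_map_has_derivative[OF C1]]
    by (simp add: D_def matrix_vector_mult_add_rdistrib)
  have D_cont: "continuous_on UNIV D"
    using C1 unfolding C1_map_def D_def by (intro continuous_intros) auto
  have "norm (jacobian h (at x) *v k) \<le> c * norm k" for x k
    by (rule norm_derivative_le_lipschitz[OF C1_map_has_derivative[OF C1] lip])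
  then have D_inv: "invertible (D x)" and D_inv_bound: "norm (matrix_inv (D x) *v z) \<le> 1 / (1 - c) * norm z" for x z
    using invertible_mat_1_add_contraction[of "jacobian h (at x)" c] \<open>c < 1\<close> by (simp_all add: D_def)
  have g_cont: "continuous_on UNIV g"
    unfolding g_def by (rule lipschitz_on_continuous_on[OF lipschitz_inv_add_contraction[OF lip \<open>c < 1\<close>]])
  have g_deriv: "(g has_derivative (\<lambda>z. matrix_inv (D (g y)) *v z)) (at y)" for y
  proof (rule has_derivative_inverse_basic[where g=g and y=y and T=UNIV, OF deriv[of "g y"]])
    show "(*v) (matrix_inv (D (g y))) \<circ> (*v) (D (g y)) = id"
      by (auto simp: matrix_vector_mul_assoc matrix_inv_left[OF D_inv])
    show "continuous (at y) g" using g_cont by (simp add: continuous_on_eq_continuous_at)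
  qed (auto simp: fg)
  have "C1_map (\<lambda>x. x + h x)"
    by (rule C1_mapI[OF deriv]) (intro continuous_intros D_cont)
  moreover have "C1_map g"
  proof (rule C1_mapI[OF g_deriv])
    show "continuous_on UNIV (\<lambda>y. matrix_inv (D (g y)) *v z)" for z
      using D_inv D_inv_bound
      by (intro continuous_on_matrix_inv_vector[where K="1 / (1 - c)"] continuous_on_compose2[OF D_cont g_cont]) auto
  qed
  ultimately show ?thesis using bij by (simp add: C1_diffeomorphism_def g_def)
qed

lemma C1_diffeomorphism_matrix_mult:
  fixes M :: "real^'n^'n"
  assumes g: "C1_diffeomorphism g" and M: "invertible M"
  shows "C1_diffeomorphism (\<lambda>x. M *v g x)"
proof -
  have bij_g: "bij g" and C1_g: "C1_map g" and C1_inv_g: "C1_map (inv g)"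
    using g by (auto simp: C1_diffeomorphism_def)
  have bij_M: "bij ((*v) M)" using M by (simp add: invertible_eq_bij)
  have inv_M: "inv ((*v) M) = (*v) (matrix_inv M)"
    by (rule inv_unique_comp)
       (simp_all add: fun_eq_iff matrix_vector_mul_assoc matrix_inv_left[OF M] matrix_inv_right[OF M])
  have comp: "(\<lambda>x. M *v g x) = (*v) M \<circ> g" by (simp add: o_def)
  have bij: "bij (\<lambda>x. M *v g x)"
    unfolding comp by (rule bij_comp[OF bij_g bij_M])
  have inv: "inv (\<lambda>x. M *v g x) = (\<lambda>y. inv g (matrix_inv M *v y))"
    unfolding comp o_inv_distrib[OF bij_M bij_g] inv_M by (simp add: o_def)
  have "C1_map (\<lambda>x. M *v g x)"
  proof (rule C1_mapI)
    show "((\<lambda>x. M *v g x) has_derivative (\<lambda>h. M *v (jacobian g (at x) *v h))) (at x)" for x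
      by (rule has_derivative_matrix_vector_mult[OF C1_map_has_derivative[OF C1_g]])
    show "continuous_on UNIV (\<lambda>x. M *v (jacobian g (at x) *v h))" for h
      using C1_g unfolding C1_map_def by (intro continuous_intros) auto
  qed
  moreover have "C1_map (\<lambda>y. inv g (matrix_inv M *v y))"
  proof (rule C1_mapI)
    show "((\<lambda>y. inv g (matrix_inv M *v y)) has_derivative
        (\<lambda>h. jacobian (inv g) (at (matrix_inv M *v y)) *v (matrix_inv M *v h))) (at y)" for y
      by (rule has_derivative_compose[OF matrix_vector_mul_bounded_linear[THEN bounded_linear_imp_has_derivative]
            C1_map_has_derivative[OF C1_inv_g]])
    show "continuous_on UNIV (\<lambda>y. jacobian (inv g) (at (matrix_inv M *v y)) *v (matrix_inv M *v h))" for h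
    proof (rule continuous_on_matrix_vector_mult[OF _ continuous_on_const])
      show "continuous_on UNIV (\<lambda>y. jacobian (inv g) (at (matrix_inv M *v y)))"
        using C1_inv_g unfolding C1_map_def
        by (rule continuous_on_compose2[OF conjunct2]) (auto intro: matrix_vector_mult_linear_continuous_on)
    qed
  qed
  ultimately show ?thesis using bij inv by (simp add: C1_diffeomorphism_def)
qed

lemma C1_diffeomorphism_linear_plus_perturbation:
  fixes M :: "real^'n^'n" and R :: "real^'n \<Rightarrow> real^'n"
  assumes M: "invertible M" and R: "C1_map R" and "0 < \<epsilon>" and "c < 1"
    and bound: "\<And>w. w \<in> ball m \<epsilon> \<Longrightarrow> sigma_max (matrix_inv M ** jacobian R (at w)) \<le> c"
    and \<Psi>: "C1_map \<Psi>" "1-lipschitz_on UNIV \<Psi>" "range \<Psi> \<subseteq> cball m \<epsilon>"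
  shows "C1_diffeomorphism (\<lambda>u. M *v u + b + R (\<Psi> u))"
proof -
  define h where "h u = matrix_inv M *v (R (\<Psi> u) + b)" for u
  have "C1_map h"
    unfolding h_def matrix_vector_right_distrib
    by (intro C1_map_compose[OF C1_map_compose[OF \<Psi>(1) R] C1_map_affine])
  have "(max c 0)-lipschitz_on (cball m \<epsilon>) (\<lambda>w. matrix_inv M *v R w)"
    using R bound \<open>0 < \<epsilon>\<close>
    by (intro lipschitz_on_cball_sigma_max_jacobian) (auto simp: C1_map_def intro: max.coboundedI1)
  then have "(max c 0 * 1 + 0)-lipschitz_on UNIV h"
    unfolding h_def matrix_vector_right_distrib using \<Psi>(2,3)
    by (intro lipschitz_on_add lipschitz_on_constant lipschitz_on_compose2[where f=\<Psi>])
       (auto intro: lipschitz_on_subset)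
  then have "C1_diffeomorphism (\<lambda>u. M *v (u + h u))"
    using C1_diffeomorphism_matrix_mult[OF C1_diffeomorphism_add_contraction[OF \<open>C1_map h\<close>] M] \<open>c < 1\<close>
    by simp
  moreover have "M *v (u + h u) = M *v u + b + R (\<Psi> u)" for u
    by (simp add: h_def matrix_vector_right_distrib matrix_vector_mul_assoc matrix_inv_right[OF M])
  ultimately show ?thesis by simp
qed

theorem proposition3p5:
  fixes lam \<delta> :: real
    and P :: "real^'n^'n" and Sig :: "real^'m^'m"
    and mu :: "real^'n" and y :: "real^'m"
    and F :: "real^'n \<Rightarrow> real^'m" and J :: "real^'n \<Rightarrow> real^'n^'m"
    and us :: "real^'n"
    and Y :: "real^'r^'m" and S :: "real^'r^'r" and X :: "real^'r^'n"
    and \<epsilon> et \<tau> :: real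
  assumes "lam > 0" and "\<delta> > 0"
    and "sym_pos_def P" and "sym_pos_def Sig"
    and F_deriv: "\<And>u. (F has_derivative (\<lambda>h. J u *v h)) (at u)"
    and J_cont: "continuous_on UNIV J"
    and rank_r: "rank (J us) = CARD('r)"
    and gsvd: "(lam / \<delta>) *\<^sub>R (matrix_inv Sig ** J us ** matrix_inv P) = Y ** S ** transpose X"
    and S_diag: "diagonal_mat S"
    and Y_orth: "transpose Y ** ((1 / lam) *\<^sub>R Sig) ** Y = mat 1"
    and X_orth: "transpose X ** (\<delta> *\<^sub>R P) ** X = mat 1"
    and eps_pos: "\<epsilon> > 0"
    and contraction:
      "\<exists>c < 1. \<forall>ur up.
         dist ur (transpose X ** (\<delta> *\<^sub>R P) *v (us - mu)) < \<epsilon> \<longrightarrow>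
         up \<in> range (\<lambda>v. (mat 1 - X ** transpose X ** (\<delta> *\<^sub>R P)) *v v) \<longrightarrow>
         sigma_max (matrix_inv (mat 1 + S ** S) **
            jacobian (\<lambda>w. (S ** transpose Y) *v
               (F (X *v w + up + mu) - J us *v (X *v w + up + mu - us) - F us)) (at ur)) \<le> c"
    and "et > 0" and "et \<le> \<epsilon>"
    and "0 < \<tau>" and "\<tau> < 1"
  shows "\<forall>up \<in> range (\<lambda>v. (mat 1 - X ** transpose X ** (\<delta> *\<^sub>R P)) *v v).
    C1_diffeomorphism (\<lambda>ur.
       (ur + (S ** transpose Y) *v (F us + J us *v (X *v ur + up + mu - us) - y))
     + (S ** transpose Y) *v
         (F (X *v Psi_map et \<tau> (transpose X ** (\<delta> *\<^sub>R P) *v (us - mu)) ur + up + mu)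
          - J us *v (X *v Psi_map et \<tau> (transpose X ** (\<delta> *\<^sub>R P) *v (us - mu)) ur + up + mu - us)
          - F us))"
proof
  fix up assume up: "up \<in> range (\<lambda>v. (mat 1 - X ** transpose X ** (\<delta> *\<^sub>R P)) *v v)"
  define mr where "mr = transpose X ** (\<delta> *\<^sub>R P) *v (us - mu)"
  define R where
    "R = (\<lambda>w. (S ** transpose Y) *v (F (X *v w + up + mu) - J us *v (X *v w + up + mu - us) - F us))"
  define b where "b = (S ** transpose Y) *v (F us + J us *v (up + mu - us) - y)"
  obtain c where "c < 1"
    and c: "\<forall>w. dist w mr < \<epsilon> \<longrightarrow>
      sigma_max (matrix_inv (mat 1 + S ** S) ** jacobian R (at w)) \<le> c"
    using contraction up unfolding mr_def[symmetric] R_def by blast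
  have "transpose Y ** J us ** X = S"
    using \<open>lam > 0\<close> \<open>\<delta> > 0\<close> invertible_sym_pos_def[OF \<open>sym_pos_def P\<close>]
      invertible_sym_pos_def[OF \<open>sym_pos_def Sig\<close>] gsvd Y_orth X_orth by (rule compact_gsvd_core)
  from projected_linearization_affine[OF this, of "F us" _ "up + mu - us" y]
  have "(\<lambda>ur. (ur + (S ** transpose Y) *v (F us + J us *v (X *v ur + up + mu - us) - y))
      + R (Psi_map et \<tau> mr ur)) = (\<lambda>u. (mat 1 + S ** S) *v u + b + R (Psi_map et \<tau> mr u))"
    by (simp add: fun_eq_iff b_def add_diff_eq matrix_vector_mult_add_rdistrib add.assoc)
  moreover have "C1_diffeomorphism (\<lambda>u. (mat 1 + S ** S) *v u + b + R (Psi_map et \<tau> mr u))"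
  proof (rule C1_diffeomorphism_linear_plus_perturbation[where m=mr and R=R and \<Psi>="Psi_map et \<tau> mr"])
    show "sigma_max (matrix_inv (mat 1 + S ** S) ** jacobian R (at w)) \<le> c" if "w \<in> ball mr \<epsilon>" for w
      using c that by (simp add: dist_commute)
    show "0 < \<epsilon>" "c < 1" by fact+
    show "invertible (mat 1 + S ** S)"
      by (rule invertible_mat_1_add_square[OF transpose_diagonal_mat[OF S_diag]])
    show "C1_map R"
      unfolding R_def add.assoc by (rule C1_map_linearization_remainder[OF F_deriv J_cont])
    show "C1_map (Psi_map et \<tau> mr)" "1-lipschitz_on UNIV (Psi_map et \<tau> mr)"
      using C1_map_Psi_map lipschitz_Psi_map \<open>et > 0\<close> \<open>0 < \<tau>\<close> \<open>\<tau> < 1\<close> by blast+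
    show "range (Psi_map et \<tau> mr) \<subseteq> cball mr \<epsilon>"
      using Psi_map_in_cball[OF \<open>et > 0\<close> \<open>0 < \<tau>\<close> \<open>\<tau> < 1\<close>] subset_cball[OF \<open>et \<le> \<epsilon>\<close>] by blast
  qed
  ultimately show "C1_diffeomorphism (\<lambda>ur.
       (ur + (S ** transpose Y) *v (F us + J us *v (X *v ur + up + mu - us) - y))
     + (S ** transpose Y) *v
         (F (X *v Psi_map et \<tau> (transpose X ** (\<delta> *\<^sub>R P) *v (us - mu)) ur + up + mu)
          - J us *v (X *v Psi_map et \<tau> (transpose X ** (\<delta> *\<^sub>R P) *v (us - mu)) ur + up + mu - us)
          - F us))"
    unfolding R_def mr_def by simp
qed

end
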